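(* Let $d$ be a homogeneous distance on $\mathbb H$ with closed unit ball $B$ centered at $0$, and let $S^+=\partial B\cap\{p: z_p>0\}$. Assume there exist sequences $p_n^-=(x_n^-,0,z_n^-)\in S^+$, $p_n^+=(x_n^+,0,z_n^+)\in S^+$ and constants $a>0$, $\bar x>0$ such that for all $n$: $x_n^-<0<x_n^+$; $z_n^->z_n^+>0$; $z_n^+-z_n^-<-a(x_n^+-x_n^-)$; $\{p\in\mathbb H: x_n^+\le x_p\le\bar x,\ y_p=0,\ z_p>z_n^+\}\subset\mathbb H\setminus B$; and $x_n^+-x_n^-\to0$ as $n\to\infty$. Then BCP does not hold in $(\mathbb H,d)$.
   Context: $\mathbb H=\mathbb R^3$, points $p=(x_p,y_p,z_p)$, group law $(x,y,z)\cdot(x',y',z')=(x+x',y+y',z+z'+\tfrac12(xy'-yx'))$, dilations $\delta_\lambda(x,y,z)=(\lambda x,\lambda y,\lambda^2z)$. A distance is homogeneous if it induces the Euclidean topology, is left invariant and satisfies $d(\delta_\lambda p,\delta_\lambda q)=\lambda d(p,q)$. BCP holds for $d$ if there is $N\geq1$ such that for every bounded $A$ and every family $\mathcal B$ of closed balls with each point of $A$ the center of some ball of $\mathcal B$, some subfamily $\mathcal F\subset\mathcal B$ satisfies $\chi_A\le\sum_{B\in\mathcal F}\chi_B\le N$. *)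

theory Defs
  imports "HOL-Analysis.Analysis"
begin

text \<open>The Heisenberg group H = R^3, points (x,y,z), with its Euclidean (product) topology.\<close>
type_synonym heis = "real \<times> real \<times> real"

definition hmult :: "heis \<Rightarrow> heis \<Rightarrow> heis" where
  "hmult p q = (case p of (x, y, z) \<Rightarrow> case q of (x', y', z') \<Rightarrow>
     (x + x', y + y', z + z' + (x * y' - y * x') / 2))"

definition dil :: "real \<Rightarrow> heis \<Rightarrow> heis" where
  "dil l p = (case p of (x, y, z) \<Rightarrow> (l * x, l * y, l^2 * z))"

definition is_distance :: "(heis \<Rightarrow> heis \<Rightarrow> real) \<Rightarrow> bool" where
  "is_distance d \<longleftrightarrow> (\<forall>p q. 0 \<le> d p q) \<and> (\<forall>p q. d p q = 0 \<longleftrightarrow> p = q)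
     \<and> (\<forall>p q. d p q = d q p) \<and> (\<forall>p q r. d p r \<le> d p q + d q r)"

definition induces_euclidean_topology :: "(heis \<Rightarrow> heis \<Rightarrow> real) \<Rightarrow> bool" where
  "induces_euclidean_topology d \<longleftrightarrow>
     (\<forall>U::heis set. open U \<longleftrightarrow> (\<forall>p\<in>U. \<exists>r>0. {q. d p q < r} \<subseteq> U))"

definition homogeneous_distance :: "(heis \<Rightarrow> heis \<Rightarrow> real) \<Rightarrow> bool" where
  "homogeneous_distance d \<longleftrightarrow> is_distance d \<and> induces_euclidean_topology d
     \<and> (\<forall>g p q. d (hmult g p) (hmult g q) = d p q)
     \<and> (\<forall>l>0. \<forall>p q. d (dil l p) (dil l q) = l * d p q)"

definition cball_d :: "(heis \<Rightarrow> heis \<Rightarrow> real) \<Rightarrow> heis \<Rightarrow> real \<Rightarrow> heis set" where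
  "cball_d d p r = {q. d p q \<le> r}"

definition bounded_d :: "(heis \<Rightarrow> heis \<Rightarrow> real) \<Rightarrow> heis set \<Rightarrow> bool" where
  "bounded_d d A \<longleftrightarrow> (\<exists>p r. A \<subseteq> cball_d d p r)"

text \<open>Families of closed balls (radius > 0) are sets of sets.
  The condition chi_A \<le> sum chi_B \<le> N is: A is covered by F and every point lies in at most N
  members of F.\<close>
definition BCP :: "(heis \<Rightarrow> heis \<Rightarrow> real) \<Rightarrow> bool" where
  "BCP d \<longleftrightarrow> (\<exists>N::nat. N \<ge> 1 \<and>
     (\<forall>A \<B>. bounded_d d A
        \<and> (\<forall>b\<in>\<B>. \<exists>c r. r > 0 \<and> b = cball_d d c r)
        \<and> (\<forall>a\<in>A. \<exists>r>0. cball_d d a r \<in> \<B>)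
        \<longrightarrow> (\<exists>\<F>\<subseteq>\<B>. A \<subseteq> \<Union>\<F> \<and>
               (\<forall>p. finite {b\<in>\<F>. p \<in> b} \<and> card {b\<in>\<F>. p \<in> b} \<le> N))))"

end

theory Submission
  imports Defs
begin

(* BCP fails as soon as there are arbitrarily large Besicovitch families: finitely many
   closed balls with a common point such that no ball contains the centre of another.
   Indeed, a subfamily covering the centres must contain every ball, and then the common
   point lies in all of them.

   The geometric part builds such families of balls B(t p, t) centred at dilates
   t p = dil t p of the points p = p_m^- on the upper unit sphere; all of them contain the
   origin.  Left translation and dilation reduce the condition "t1 p_m1 lies outside
   B(t2 p_m2, t2)" for t1 < t2 to "p_m2 minus a shrunken copy of p_m1 lies in the region of
   the xz-plane assumed to be outside the unit ball" (predicate well_placed).  Since the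
   widths x_n^+ - x_n^- tend to 0, every finite set of balls can be followed by a larger
   well-placed one, so chains of any length exist. *)

lemma distance_commute: "is_distance d \<Longrightarrow> d p q = d q p"
  unfolding is_distance_def by blast

lemma distance_triangle: "is_distance d \<Longrightarrow> d p r \<le> d p q + d q r"
  unfolding is_distance_def by blast

lemma distance_self: "is_distance d \<Longrightarrow> d p p = 0"
  unfolding is_distance_def by blast

lemma cball_d_closed:
  assumes dist: "is_distance d" and top: "induces_euclidean_topology d"
  shows "closed (cball_d d c r)"
proof -
  have "\<exists>\<rho>>0. {q. d p q < \<rho>} \<subseteq> - cball_d d c r" if "p \<in> - cball_d d c r" for p
  proof (intro exI conjI subsetI)
    show "0 < d c p - r" using that by (simp add: cball_d_def)
    fix q assume "q \<in> {q. d p q < d c p - r}"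
    moreover have "d c p \<le> d c q + d q p" and "d q p = d p q"
      using distance_triangle[OF dist] distance_commute[OF dist] by blast+
    ultimately show "q \<in> - cball_d d c r" by (simp add: cball_d_def)
  qed
  then have "open (- cball_d d c r)"
    using top unfolding induces_euclidean_topology_def by blast
  then show ?thesis by (simp add: closed_def)
qed

definition besicovitch_family ::
  "(heis \<Rightarrow> heis \<Rightarrow> real) \<Rightarrow> (nat \<Rightarrow> heis) \<Rightarrow> (nat \<Rightarrow> real) \<Rightarrow> nat \<Rightarrow> bool" where
  "besicovitch_family d c r k \<longleftrightarrow> (\<forall>i<k. 0 < r i)
     \<and> (\<exists>q. \<forall>i<k. q \<in> cball_d d (c i) (r i))
     \<and> (\<forall>i<k. \<forall>j<k. i \<noteq> j \<longrightarrow> c i \<notin> cball_d d (c j) (r j))"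

text \<open>The centres of a Besicovitch family form a bounded set: they lie within the
  largest radius of the common point.\<close>

lemma besicovitch_family_centres_bounded:
  assumes dist: "is_distance d" and fam: "besicovitch_family d c r k"
  shows "bounded_d d (c ` {..<k})"
proof -
  obtain q where q: "\<And>i. i < k \<Longrightarrow> d (c i) q \<le> r i"
    using fam by (auto simp: besicovitch_family_def cball_d_def)
  have "c i \<in> cball_d d q (Max (r ` {..<k}))" if "i < k" for i
  proof -
    have "d q (c i) = d (c i) q" by (rule distance_commute[OF dist])
    also have "\<dots> \<le> Max (r ` {..<k})" using q[OF that] that by (meson Max_ge finite_imageI
          finite_lessThan image_eqI lessThan_iff order_trans)
    finally show ?thesis by (simp add: cball_d_def)
  qed
  then show ?thesis unfolding bounded_d_def by blast
qed

text \<open>Each ball of a Besicovitch family is the only one containing its centre; hence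
  any subfamily covering all centres is the whole family, and distinct indices give
  distinct balls.\<close>

lemma besicovitch_family_cover_is_total:
  assumes fam: "besicovitch_family d c r k"
    and sub: "\<F> \<subseteq> (\<lambda>i. cball_d d (c i) (r i)) ` {..<k}"
    and cover: "c ` {..<k} \<subseteq> \<Union>\<F>"
  shows "(\<lambda>i. cball_d d (c i) (r i)) ` {..<k} \<subseteq> \<F>"
proof clarify
  fix i assume i: "i < k"
  then obtain b where b: "b \<in> \<F>" "c i \<in> b" using cover by blast
  then obtain j where j: "j < k" "b = cball_d d (c j) (r j)" using sub by blast
  then have "j = i" using fam b i by (auto simp: besicovitch_family_def)
  then show "cball_d d (c i) (r i) \<in> \<F>" using b j by simp
qed

lemma besicovitch_family_inj:
  assumes dist: "is_distance d" and fam: "besicovitch_family d c r k"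
  shows "inj_on (\<lambda>i. cball_d d (c i) (r i)) {..<k}"
proof (rule inj_onI)
  fix i j assume ij: "i \<in> {..<k}" "j \<in> {..<k}"
    and eq: "cball_d d (c i) (r i) = cball_d d (c j) (r j)"
  have "c i \<in> cball_d d (c i) (r i)"
    using distance_self[OF dist] fam ij by (auto simp: besicovitch_family_def cball_d_def less_imp_le)
  then show "i = j" using eq fam ij by (auto simp: besicovitch_family_def)
qed

theorem not_BCP_if_besicovitch_families:
  assumes dist: "is_distance d" and fams: "\<And>k. \<exists>c r. besicovitch_family d c r k"
  shows "\<not> BCP d"
proof
  assume "BCP d"
  then obtain N :: nat where N: "\<forall>A \<B>. bounded_d d A
        \<and> (\<forall>b\<in>\<B>. \<exists>c r. r > 0 \<and> b = cball_d d c r)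
        \<and> (\<forall>a\<in>A. \<exists>r>0. cball_d d a r \<in> \<B>)
        \<longrightarrow> (\<exists>\<F>\<subseteq>\<B>. A \<subseteq> \<Union>\<F> \<and>
               (\<forall>p. finite {b\<in>\<F>. p \<in> b} \<and> card {b\<in>\<F>. p \<in> b} \<le> N))"
    unfolding BCP_def by blast
  obtain c r where fam: "besicovitch_family d c r (Suc N)" using fams by blast
  then obtain q where q: "\<And>i. i < Suc N \<Longrightarrow> q \<in> cball_d d (c i) (r i)"
    by (auto simp: besicovitch_family_def)
  define balls where "balls = (\<lambda>i. cball_d d (c i) (r i)) ` {..<Suc N}"
  have radii: "\<forall>b\<in>balls. \<exists>c r. r > 0 \<and> b = cball_d d c r"
    using fam unfolding balls_def besicovitch_family_def by blast
  have centres: "\<forall>x\<in>c ` {..<Suc N}. \<exists>\<rho>>0. cball_d d x \<rho> \<in> balls"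
    using fam unfolding balls_def besicovitch_family_def by blast
  obtain \<F> where \<F>: "\<F> \<subseteq> balls" "c ` {..<Suc N} \<subseteq> \<Union>\<F>"
    "finite {b\<in>\<F>. q \<in> b}" "card {b\<in>\<F>. q \<in> b} \<le> N"
    using N[rule_format, of "c ` {..<Suc N}" balls] besicovitch_family_centres_bounded[OF dist fam]
      radii centres by blast
  have "balls \<subseteq> {b\<in>\<F>. q \<in> b}"
    using besicovitch_family_cover_is_total[OF fam] \<F>(1,2) q by (auto simp: balls_def)
  then have "card balls \<le> N" using card_mono[OF \<F>(3)] \<F>(4) by (meson order_trans)
  moreover have "card balls = Suc N"
    using card_image[OF besicovitch_family_inj[OF dist fam]] by (simp add: balls_def)
  ultimately show False by simp
qed

text \<open>Distances between dilates of points of the xz-plane: translating the first point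
  to the origin and undoing the larger dilation leaves the point p2 - (s/t) p1 (with the
  z-coordinate scaled by (s/t)^2); the group law has no correction term when y = 0.\<close>

lemma distance_xz_dilates:
  assumes hd: "homogeneous_distance d" and t: "0 < t"
  shows "d (dil s (x1, 0, z1)) (dil t (x2, 0, z2))
           = t * d (0, 0, 0) (x2 - s / t * x1, 0, z2 - (s / t)^2 * z1)"
proof -
  define g where "g = (- (s * x1), 0::real, - (s^2 * z1))"
  define v where "v = (x2 - s / t * x1, 0::real, z2 - (s / t)^2 * z1)"
  have to_origin: "hmult g (dil s (x1, 0, z1)) = dil t (0, 0, 0)"
    by (simp add: g_def hmult_def dil_def)
  have "hmult g (dil t (x2, 0, z2)) = dil t v"
    using t by (simp add: g_def v_def hmult_def dil_def field_simps power2_eq_square)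
  then have "d (dil s (x1, 0, z1)) (dil t (x2, 0, z2)) = d (dil t (0, 0, 0)) (dil t v)"
    using hd to_origin unfolding homogeneous_distance_def by metis
  also have "\<dots> = t * d (0, 0, 0) v" using hd t unfolding homogeneous_distance_def by blast
  finally show ?thesis by (simp add: v_def)
qed

text \<open>The hypotheses of the theorem, with the sphere conditions weakened to what is used:
  the points p_n^- lie in the unit ball, and the slab above p_n^+ lies outside it.\<close>

locale flat_corner =
  fixes d :: "heis \<Rightarrow> heis \<Rightarrow> real"
    and xm zm xp zp :: "nat \<Rightarrow> real" and a xbar :: real
  assumes homogeneous: "homogeneous_distance d"
    and pm_in_ball: "\<And>n. d (0, 0, 0) (xm n, 0, zm n) \<le> 1"
    and a_pos: "0 < a" and xbar_pos: "0 < xbar"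
    and signs: "\<And>n. xm n < 0 \<and> 0 < xp n"
    and height_gap: "\<And>n. a * (xp n - xm n) < zm n - zp n"
    and slab_outside: "\<And>n x z. xp n \<le> x \<Longrightarrow> x \<le> xbar \<Longrightarrow> zp n < z
                          \<Longrightarrow> 1 < d (0, 0, 0) (x, 0, z)"
    and width_to_zero: "(\<lambda>n. xp n - xm n) \<longlonglongrightarrow> 0"
begin

definition width :: "nat \<Rightarrow> real" where
  "width n = xp n - xm n"

definition centre :: "real \<Rightarrow> nat \<Rightarrow> heis" where
  "centre t m = dil t (xm m, 0, zm m)"

text \<open>Placement condition for a ball (t2, m2) relative to a smaller ball (t1, m1);
  it puts the translated centre into the slab that is outside the unit ball.\<close>

definition well_placed :: "real \<Rightarrow> nat \<Rightarrow> real \<Rightarrow> nat \<Rightarrow> bool" where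
  "well_placed t1 m1 t2 m2 \<longleftrightarrow> t1 < t2 \<and> width m2 \<le> t1 / t2 * (- xm m1)
     \<and> t1 / t2 * (- xm m1) \<le> xbar \<and> (t1 / t2)^2 * zm m1 < a * width m2"

lemma width_pos: "0 < width n"
  using signs[of n] by (simp add: width_def)

lemma distance_symmetric: "d p q = d q p"
  using homogeneous distance_commute unfolding homogeneous_distance_def by blast

lemma origin_in_ball:
  assumes t: "0 < t"
  shows "d (centre t m) (0, 0, 0) \<le> t"
proof -
  have "d (centre t m) (0, 0, 0) = d (dil t (xm m, 0, zm m)) (dil t (0, 0, 0))"
    by (simp add: centre_def dil_def)
  also have "\<dots> = t * d (0, 0, 0) (xm m, 0, zm m)"
    using homogeneous t distance_symmetric unfolding homogeneous_distance_def by metis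
  also have "\<dots> \<le> t" using pm_in_ball[of m] t by (simp add: mult_left_le)
  finally show ?thesis .
qed

lemma well_placed_far:
  assumes t1: "0 < t1" and wp: "well_placed t1 m1 t2 m2"
  shows "t2 < d (centre t1 m1) (centre t2 m2)"
proof -
  have t2: "0 < t2" using t1 wp by (simp add: well_placed_def)
  have "1 < d (0, 0, 0) (xm m2 - t1 / t2 * xm m1, 0, zm m2 - (t1 / t2)^2 * zm m1)"
    using wp height_gap[of m2] signs[of m2]
    by (intro slab_outside[of m2]) (auto simp: well_placed_def width_def)
  then show ?thesis
    using distance_xz_dilates[OF homogeneous t2] t2 by (simp add: centre_def)
qed

lemma well_placed_by_scaling:
  assumes mu: "0 < \<mu>" "\<mu> \<le> t * (- xm m)"
    and small: "t * width n < \<mu>" "t * (- xm m) * width n < xbar * \<mu>"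
      "t^2 * zm m * width n < a * \<mu>^2"
  shows "well_placed t m (\<mu> / width n) n"
proof -
  have w: "0 < width n" by (rule width_pos)
  have ratio: "t / (\<mu> / width n) = t * width n / \<mu>" using w mu by simp
  have "(t * width n / \<mu>)^2 * zm m = width n * (t^2 * zm m * width n) / \<mu>^2"
    by (simp add: power2_eq_square field_simps)
  also have "\<dots> < width n * (a * \<mu>^2) / \<mu>^2"
    using small(3) w mu by (intro divide_strict_right_mono mult_strict_left_mono) auto
  also have "\<dots> = a * width n" using mu by simp
  finally have height: "(t * width n / \<mu>)^2 * zm m < a * width n" .
  have "width n * \<mu> \<le> width n * (t * (- xm m))" using mult_left_mono[OF mu(2)] w by simp
  then show ?thesis
    using small(1,2) height w mu unfolding well_placed_def ratio
    by (simp add: field_simps)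
qed

lemma exists_well_placed_after:
  assumes fin: "finite S" and pos: "\<forall>(t, m)\<in>S. 0 < t"
  shows "\<exists>T n. 0 < T \<and> (\<forall>(t, m)\<in>S. well_placed t m T n)"
proof (cases "S = {}")
  case True
  then show ?thesis by (intro exI[of _ 1]) auto
next
  case False
  define \<mu> where "\<mu> = Min ((\<lambda>(t, m). t * (- xm m)) ` S)"
  have mu_pos: "0 < \<mu>"
    unfolding \<mu>_def using fin False pos signs by (subst Min_gr_iff) (auto simp: mult_less_0_iff)
  have mu_le: "\<mu> \<le> t * (- xm m)" if "(t, m) \<in> S" for t m
    unfolding \<mu>_def using fin that by (intro Min_le) auto
  have small_eventually: "\<forall>\<^sub>F n in sequentially. K * width n < L" if "0 < L" for K L
    using order_tendstoD(2)[OF tendsto_mult_right_zero[OF width_to_zero, of K] that]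
    by (simp add: width_def)
  have each: "\<forall>\<^sub>F n in sequentially. case p of (t, m) \<Rightarrow> t * width n < \<mu>
          \<and> t * (- xm m) * width n < xbar * \<mu> \<and> t^2 * zm m * width n < a * \<mu>^2" for p
    unfolding case_prod_beta
    by (intro eventually_conj small_eventually) (use mu_pos a_pos xbar_pos in auto)
  have "\<forall>\<^sub>F n in sequentially. \<forall>(t, m)\<in>S. t * width n < \<mu>
          \<and> t * (- xm m) * width n < xbar * \<mu> \<and> t^2 * zm m * width n < a * \<mu>^2"
    by (rule eventually_ball_finite[OF fin]) (rule ballI, rule each)
  then obtain n where small: "\<forall>(t, m)\<in>S. t * width n < \<mu>
          \<and> t * (- xm m) * width n < xbar * \<mu> \<and> t^2 * zm m * width n < a * \<mu>^2"
    unfolding eventually_sequentially by blast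
  have "well_placed t m (\<mu> / width n) n" if "(t, m) \<in> S" for t m
  proof (rule well_placed_by_scaling[OF mu_pos mu_le[OF that]])
    show "t * width n < \<mu>" "t * (- xm m) * width n < xbar * \<mu>"
      "t^2 * zm m * width n < a * \<mu>^2"
      using bspec[OF small that] by simp_all
  qed
  then have "\<forall>(t, m)\<in>S. well_placed t m (\<mu> / width n) n" by blast
  moreover have "0 < \<mu> / width n" using mu_pos width_pos by simp
  ultimately show ?thesis by blast
qed

lemma well_placed_chain:
  fixes k :: nat
  shows "\<exists>t m. (\<forall>i<k. 0 < t i) \<and> (\<forall>i j. i < j \<longrightarrow> j < k \<longrightarrow> well_placed (t i) (m i) (t j) (m j))"
proof (induction k)
  case 0
  then show ?case by auto
next
  case (Suc k)
  then obtain t m where pos: "\<forall>i<k. 0 < t i"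
    and chain: "\<forall>i j. i < j \<longrightarrow> j < k \<longrightarrow> well_placed (t i) (m i) (t j) (m j)"
    by blast
  obtain T n where T: "0 < T"
    and after: "\<forall>(s, l)\<in>(\<lambda>i. (t i, m i)) ` {..<k}. well_placed s l T n"
    using exists_well_placed_after[of "(\<lambda>i. (t i, m i)) ` {..<k}"] pos by auto
  define t' m' where "t' = t(k := T)" and "m' = m(k := n)"
  have "\<forall>i<Suc k. 0 < t' i" using pos T by (simp add: t'_def less_Suc_eq)
  moreover have "well_placed (t' i) (m' i) (t' j) (m' j)" if "i < j" "j < Suc k" for i j
  proof (cases "j = k")
    case True
    then show ?thesis using after that by (auto simp: t'_def m'_def)
  next
    case False
    then show ?thesis using chain that by (simp add: t'_def m'_def)
  qed
  ultimately show ?case by blast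
qed

text \<open>A chain gives a Besicovitch family with common point the origin.\<close>

lemma besicovitch_families: "\<exists>c r. besicovitch_family d c r k"
proof -
  obtain t m where pos: "\<forall>i<k. 0 < t i"
    and chain: "\<forall>i j. i < j \<longrightarrow> j < k \<longrightarrow> well_placed (t i) (m i) (t j) (m j)"
    using well_placed_chain by blast
  have separated: "centre (t i) (m i) \<notin> cball_d d (centre (t j) (m j)) (t j)"
    if "i < k" "j < k" "i \<noteq> j" for i j
  proof (cases "i < j")
    case True
    then have "t j < d (centre (t i) (m i)) (centre (t j) (m j))"
      using well_placed_far[of "t i" "m i" "t j" "m j"] pos chain that by simp
    then show ?thesis
      using distance_symmetric[of "centre (t j) (m j)"] by (simp add: cball_d_def)
  next
    case False
    then have "j < i" using that by simp
    then have "t j < t i" "t i < d (centre (t j) (m j)) (centre (t i) (m i))"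
      using well_placed_far[of "t j" "m j" "t i" "m i"] pos chain that
      by (simp_all add: well_placed_def)
    then show ?thesis by (simp add: cball_d_def)
  qed
  have "\<forall>i<k. (0, 0, 0) \<in> cball_d d (centre (t i) (m i)) (t i)"
    using origin_in_ball pos by (simp add: cball_d_def)
  then have "besicovitch_family d (\<lambda>i. centre (t i) (m i)) t k"
    using pos separated unfolding besicovitch_family_def by blast
  then show ?thesis by blast
qed

theorem no_BCP: "\<not> BCP d"
  using not_BCP_if_besicovitch_families besicovitch_families homogeneous
  unfolding homogeneous_distance_def by blast

end

theorem theorem6p2:
  fixes d :: "heis \<Rightarrow> heis \<Rightarrow> real"
    and xm zm xp zp :: "nat \<Rightarrow> real" and a xbar :: real
  defines "B \<equiv> cball_d d (0, 0, 0) 1"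
  defines "Splus \<equiv> frontier B \<inter> {p. snd (snd p) > 0}"
  assumes hd: "homogeneous_distance d"
    and "\<And>n. (xm n, 0, zm n) \<in> Splus"
    and "\<And>n. (xp n, 0, zp n) \<in> Splus"
    and "a > 0" and "xbar > 0"
    and "\<And>n. xm n < 0 \<and> 0 < xp n"
    and "\<And>n. zm n > zp n \<and> zp n > 0"
    and "\<And>n. zp n - zm n < - a * (xp n - xm n)"
    and "\<And>n. {p. xp n \<le> fst p \<and> fst p \<le> xbar \<and> fst (snd p) = 0 \<and> snd (snd p) > zp n}
              \<subseteq> UNIV - B"
    and "(\<lambda>n. xp n - xm n) \<longlonglongrightarrow> 0"
  shows "\<not> BCP d"
proof -
  have "frontier B \<subseteq> B"
    using hd cball_d_closed frontier_subset_closed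
    unfolding B_def homogeneous_distance_def by blast
  then have "d (0, 0, 0) (xm n, 0, zm n) \<le> 1" for n
    using assms(4) by (auto simp: Splus_def B_def cball_d_def)
  moreover have "1 < d (0, 0, 0) (x, 0, z)" if "xp n \<le> x" "x \<le> xbar" "zp n < z" for n x z
  proof -
    have "(x, 0, z) \<in> {p. xp n \<le> fst p \<and> fst p \<le> xbar \<and> fst (snd p) = 0 \<and> snd (snd p) > zp n}"
      using that by simp
    then have "(x, 0, z) \<notin> B" using assms(11)[of n] by blast
    then show ?thesis by (simp add: B_def cball_d_def)
  qed
  moreover have "a * (xp n - xm n) < zm n - zp n" for n using assms(10)[of n] by linarith
  ultimately interpret flat_corner d xm zm xp zp a xbar
    using assms(3,6-8,12) by unfold_locales
  show ?thesis by (rule no_BCP)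
qed

end
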